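(* $1$-occurrence TAP is solvable exactly in polynomial time.
   Context: Target Approximation Problem (TAP): the input is a groundset $U=\{1,\dots,n\}$ of features, a target $T\subseteq U$, and a collection $S=\{E_1,\dots,E_m\}$ of exemplars, each $E_j\subseteq U$. Features in $U\cap T$ are blue, features in $U\setminus T$ are red. A feature appears in $S'\subseteq S$ if it lies in $\bigcup_{E\in S'}E$. The margin of $S'$ is (number of blue features appearing in $S'$) minus (number of red features appearing in $S'$); TAP asks for $S'$ of maximum margin. It is assumed that every feature appears in at least one exemplar and that $T$ and all exemplars are nonempty. $k$-occurrence TAP is TAP restricted to instances in which every feature belongs to at most $k$ exemplars. *)

theory Defs
  imports Main
begin

text \<open>An instance is given by the size n of the groundset U = {1..n}, the target T
(as a list of features) and the exemplars E_0, ..., E_(m-1) (as a list of lists of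
features; exemplar j is the set of elements of the j-th list).  A subcollection of
exemplars is represented by a set J of indices.\<close>

definition tap_instance :: "nat \<Rightarrow> nat list \<Rightarrow> nat list list \<Rightarrow> bool" where
  "tap_instance n T Es \<longleftrightarrow>
     set T \<subseteq> {1..n} \<and> set T \<noteq> {} \<and>
     (\<forall>j < length Es. set (Es ! j) \<noteq> {} \<and> set (Es ! j) \<subseteq> {1..n}) \<and>
     {1..n} \<subseteq> (\<Union>j<length Es. set (Es ! j))"

definition occurrence_bounded :: "nat \<Rightarrow> nat list list \<Rightarrow> bool" where
  "occurrence_bounded k Es \<longleftrightarrow> (\<forall>u. card {j. j < length Es \<and> u \<in> set (Es ! j)} \<le> k)"

definition margin :: "nat list \<Rightarrow> nat list list \<Rightarrow> nat set \<Rightarrow> int" where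
  "margin T Es J =
     int (card ((\<Union>j\<in>J. set (Es ! j)) \<inter> set T)) - int (card ((\<Union>j\<in>J. set (Es ! j)) - set T))"

definition tap_optimal :: "nat list \<Rightarrow> nat list list \<Rightarrow> nat set \<Rightarrow> bool" where
  "tap_optimal T Es J \<longleftrightarrow> J \<subseteq> {..<length Es} \<and>
     (\<forall>J' \<subseteq> {..<length Es}. margin T Es J' \<le> margin T Es J)"

definition tap_size :: "nat \<Rightarrow> nat list \<Rightarrow> nat list list \<Rightarrow> nat" where
  "tap_size n T Es = n + length T + length Es + sum_list (map length Es)"

fun mem :: "nat \<Rightarrow> nat list \<Rightarrow> bool" where
  "mem x [] = False"
| "mem x (y # ys) = (if x = y then True else mem x ys)"

fun dedup :: "nat list \<Rightarrow> nat list" where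
  "dedup [] = []"
| "dedup (x # xs) = (if mem x xs then dedup xs else x # dedup xs)"

fun count_blue :: "nat list \<Rightarrow> nat list \<Rightarrow> nat" where
  "count_blue T [] = 0"
| "count_blue T (x # xs) = (if mem x T then Suc (count_blue T xs) else count_blue T xs)"

fun count_red :: "nat list \<Rightarrow> nat list \<Rightarrow> nat" where
  "count_red T [] = 0"
| "count_red T (x # xs) = (if mem x T then count_red T xs else Suc (count_red T xs))"

fun select :: "nat list \<Rightarrow> nat \<Rightarrow> nat list list \<Rightarrow> nat list" where
  "select T i [] = []"
| "select T i (E # Es) =
     (let D = dedup E in
      if count_red T D < count_blue T D then i # select T (Suc i) Es else select T (Suc i) Es)"

definition tap1 :: "nat list \<Rightarrow> nat list list \<Rightarrow> nat list" where
  "tap1 T Es = select T 0 Es"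

text \<open>Step-counting time functions, written by hand following the conventions of the
time_fun command of HOL-Library (Time_Commands): each function call costs 1 plus the cost
of the calls it makes; primitive operations (equality test, Suc, comparison of nat,
list constructors, let) cost nothing.\<close>

fun T_mem :: "nat \<Rightarrow> nat list \<Rightarrow> nat" where
  "T_mem x [] = 1"
| "T_mem x (y # ys) = (if x = y then 0 else T_mem x ys) + 1"

fun T_dedup :: "nat list \<Rightarrow> nat" where
  "T_dedup [] = 1"
| "T_dedup (x # xs) = T_mem x xs + T_dedup xs + 1"

fun T_count_blue :: "nat list \<Rightarrow> nat list \<Rightarrow> nat" where
  "T_count_blue T [] = 1"
| "T_count_blue T (x # xs) = T_mem x T + T_count_blue T xs + 1"

fun T_count_red :: "nat list \<Rightarrow> nat list \<Rightarrow> nat" where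
  "T_count_red T [] = 1"
| "T_count_red T (x # xs) = T_mem x T + T_count_red T xs + 1"

fun T_select :: "nat list \<Rightarrow> nat \<Rightarrow> nat list list \<Rightarrow> nat" where
  "T_select T i [] = 1"
| "T_select T i (E # Es) =
     (let D = dedup E in
      T_dedup E + T_count_red T D + T_count_blue T D + T_select T (Suc i) Es + 1)"

definition T_tap1 :: "nat list \<Rightarrow> nat list list \<Rightarrow> nat" where
  "T_tap1 T Es = T_select T 0 Es + 1"

end

theory Submission
  imports Defs
begin

text \<open>If every feature lies in at most one exemplar, the exemplars are pairwise disjoint,
so the margin of a subcollection is the sum of the margins of its members.  A subcollection
of maximum margin is therefore obtained by taking exactly the exemplars of positive margin,
which is what tap1 computes; each exemplar costs at most quadratically many steps.\<close>

lemma mem_iff [simp]: "mem x xs \<longleftrightarrow> x \<in> set xs"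
  by (induction xs) auto

lemma set_dedup [simp]: "set (dedup xs) = set xs"
  by (induction xs) auto

lemma distinct_dedup: "distinct (dedup xs)"
  by (induction xs) auto

lemma length_dedup_le: "length (dedup xs) \<le> length xs"
  by (induction xs) auto

lemma count_blue_eq_card: "distinct D \<Longrightarrow> count_blue T D = card (set D \<inter> set T)"
  by (induction D) (auto simp: insert_Diff_if)

lemma count_red_eq_card: "distinct D \<Longrightarrow> count_red T D = card (set D - set T)"
  by (induction D) (auto simp: insert_Diff_if)

lemma margin_singleton:
  "margin T Es {j} = int (card (set (Es ! j) \<inter> set T)) - int (card (set (Es ! j) - set T))"
  by (simp add: margin_def)

lemma mem_select_iff:
  "k \<in> set (select T i Es) \<longleftrightarrow> i \<le> k \<and> k < i + length Es \<and> 0 < margin T Es {k - i}"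
proof (induction Es arbitrary: i)
  case (Cons E Es)
  have shift: "margin T (E # Es) {Suc m} = margin T Es {m}" for m
    by (simp add: margin_singleton)
  show ?case
  proof (cases "k = i")
    case True
    then show ?thesis
      using Cons.IH[of "Suc i"]
      by (simp add: Let_def margin_singleton count_red_eq_card count_blue_eq_card distinct_dedup)
  next
    case False
    have "k - i = Suc (k - Suc i)" if "i \<le> k"
      using that False by simp
    then show ?thesis
      using Cons.IH[of "Suc i"] False by (auto simp: Let_def shift)
  qed
qed simp

lemma set_tap1: "set (tap1 T Es) = {j. j < length Es \<and> 0 < margin T Es {j}}"
  by (auto simp: tap1_def mem_select_iff)

lemma occurrence_bounded_1_disjoint:
  assumes "occurrence_bounded 1 Es" "j < length Es" "k < length Es" "j \<noteq> k"
  shows "set (Es ! j) \<inter> set (Es ! k) = {}"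
proof (rule ccontr)
  assume "set (Es ! j) \<inter> set (Es ! k) \<noteq> {}"
  then obtain u where u: "u \<in> set (Es ! j)" "u \<in> set (Es ! k)" by auto
  let ?occ = "{i. i < length Es \<and> u \<in> set (Es ! i)}"
  have "card {j, k} \<le> card ?occ"
    using u assms(2,3) by (intro card_mono) auto
  moreover have "card ?occ \<le> 1"
    using assms(1) unfolding occurrence_bounded_def by blast
  ultimately show False using assms(4) by simp
qed

lemma margin_eq_sum_singletons:
  assumes "occurrence_bounded 1 Es" "J \<subseteq> {..<length Es}"
  shows "margin T Es J = (\<Sum>j\<in>J. margin T Es {j})"
proof -
  have fin: "finite J" using assms(2) finite_subset by blast
  have disj: "\<forall>j\<in>J. \<forall>k\<in>J. j \<noteq> k \<longrightarrow> set (Es ! j) \<inter> set (Es ! k) = {}"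
    using occurrence_bounded_1_disjoint[OF assms(1)] assms(2) by blast
  have "(\<Union>j\<in>J. set (Es ! j)) \<inter> set T = (\<Union>j\<in>J. set (Es ! j) \<inter> set T)"
       "(\<Union>j\<in>J. set (Es ! j)) - set T = (\<Union>j\<in>J. set (Es ! j) - set T)"
    by auto
  moreover have "card (\<Union>j\<in>J. set (Es ! j) \<inter> set T) = (\<Sum>j\<in>J. card (set (Es ! j) \<inter> set T))"
    using fin disj by (intro card_UN_disjoint) blast+
  moreover have "card (\<Union>j\<in>J. set (Es ! j) - set T) = (\<Sum>j\<in>J. card (set (Es ! j) - set T))"
    using fin disj by (intro card_UN_disjoint) blast+
  ultimately show ?thesis
    by (simp add: margin_def margin_singleton sum_subtractf)
qed

lemma sum_le_sum_positive_part:
  fixes f :: "'a \<Rightarrow> 'b::{ordered_comm_monoid_add, linorder}"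
  assumes "finite A" "J \<subseteq> A"
  shows "sum f J \<le> sum f {j \<in> A. 0 < f j}"
proof -
  have "sum f J = sum f (J \<inter> {j. 0 < f j}) + sum f (J - {j. 0 < f j})"
    using finite_subset[OF assms(2,1)] by (rule sum.Int_Diff)
  also have "\<dots> \<le> sum f (J \<inter> {j. 0 < f j}) + 0"
    by (intro add_left_mono sum_nonpos) auto
  also have "\<dots> \<le> sum f {j \<in> A. 0 < f j}"
    using assms by (auto intro: sum_mono2)
  finally show ?thesis .
qed

lemma tap1_optimal:
  assumes "occurrence_bounded 1 Es"
  shows "tap_optimal T Es (set (tap1 T Es))"
  unfolding tap_optimal_def set_tap1
proof (intro conjI allI impI)
  fix J assume J: "J \<subseteq> {..<length Es}"
  have "margin T Es J \<le> (\<Sum>j\<in>{j \<in> {..<length Es}. 0 < margin T Es {j}}. margin T Es {j})"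
    unfolding margin_eq_sum_singletons[OF assms J] by (rule sum_le_sum_positive_part) (use J in auto)
  also have "\<dots> = margin T Es {j. j < length Es \<and> 0 < margin T Es {j}}"
    by (subst margin_eq_sum_singletons[OF assms]) auto
  finally show "margin T Es J \<le> margin T Es {j. j < length Es \<and> 0 < margin T Es {j}}" .
qed auto

lemma T_mem_le: "T_mem x ys \<le> length ys + 1"
  by (induction ys) auto

lemma T_dedup_le: "T_dedup xs \<le> (length xs + 1) ^ 2"
proof (induction xs)
  case (Cons x xs)
  then show ?case using T_mem_le[of x xs] by (simp add: power2_eq_square)
qed simp

lemma T_count_blue_le: "T_count_blue T D \<le> (length D + 1) * (length T + 2)"
proof (induction D)
  case (Cons x D)
  then show ?case using T_mem_le[of x T] by simp
qed simp

lemma T_count_red_le: "T_count_red T D \<le> (length D + 1) * (length T + 2)"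
proof (induction D)
  case (Cons x D)
  then show ?case using T_mem_le[of x T] by simp
qed simp

lemma T_select_le:
  assumes "length T \<le> K" "\<forall>E\<in>set Es. length E \<le> K"
  shows "T_select T i Es \<le> length Es * (3 * (K + 2) ^ 2 + 1) + 1"
  using assms(2)
proof (induction Es arbitrary: i)
  case (Cons E Es)
  have E: "length E + 1 \<le> K + 2" and D: "length (dedup E) + 1 \<le> K + 2"
    using Cons.prems length_dedup_le[of E] by auto
  have T: "length T + 2 \<le> K + 2" using assms(1) by simp
  have "T_dedup E \<le> (K + 2) ^ 2"
    using T_dedup_le[of E] power_mono[OF E, of 2] by linarith
  moreover have "T_count_red T (dedup E) \<le> (K + 2) ^ 2"
    using T_count_red_le[of T "dedup E"] mult_le_mono[OF D T] by (simp add: power2_eq_square)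
  moreover have "T_count_blue T (dedup E) \<le> (K + 2) ^ 2"
    using T_count_blue_le[of T "dedup E"] mult_le_mono[OF D T] by (simp add: power2_eq_square)
  moreover have "T_select T (Suc i) Es \<le> length Es * (3 * (K + 2) ^ 2 + 1) + 1"
    using Cons by simp
  ultimately show ?case
    by (simp add: Let_def algebra_simps)
qed simp

lemma T_tap1_le: "T_tap1 T Es \<le> 14 * (tap_size n T Es + 1) ^ 3"
proof -
  define s where "s = tap_size n T Es"
  have "length T \<le> s" "length Es \<le> s" "\<forall>E\<in>set Es. length E \<le> s"
    using member_le_sum_list[of _ "map length Es"] by (fastforce simp: s_def tap_size_def)+
  then have "T_tap1 T Es \<le> length Es * (3 * (s + 2) ^ 2 + 1) + 2"
    using T_select_le[of T s Es 0] unfolding T_tap1_def by simp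
  also have "\<dots> \<le> s * (3 * (s + 2) ^ 2 + 1) + 2"
    using \<open>length Es \<le> s\<close> by (intro add_right_mono mult_right_mono) auto
  also have "\<dots> \<le> 14 * (s + 1) ^ 3"
    by (simp add: power2_eq_square power3_eq_cube algebra_simps)
  finally show ?thesis unfolding s_def .
qed

text \<open>Neither part uses the well-formedness conditions of tap_instance.\<close>

theorem theorem7:
  shows "(\<forall>n T Es. tap_instance n T Es \<and> occurrence_bounded 1 Es \<longrightarrow>
            tap_optimal T Es (set (tap1 T Es))) \<and>
         (\<exists>c d::nat. \<forall>n T Es. tap_instance n T Es \<and> occurrence_bounded 1 Es \<longrightarrow>
            T_tap1 T Es \<le> c * (tap_size n T Es + 1) ^ d)"
  using tap1_optimal T_tap1_le by blast

end
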